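(* Let $P$ be a poset on $[n]$ with natural labeling. For every $1\le j\le n-1$, the operator $\tau_j$ on $\mathcal{L}(P)$ can be expressed as a product (composite) of extended promotion operators $\partial_1,\dots,\partial_n$.
   Context: $\mathcal{L}(P)=\{\pi\in S_n : i\prec j \Rightarrow \pi^{-1}_i<\pi^{-1}_j\}$ in one-line notation $\pi=\pi_1\cdots\pi_n$. For $1\le i<n$, $\pi\tau_i$ swaps $\pi_i,\pi_{i+1}$ if they are incomparable in $P$ and is $\pi$ otherwise; operators act on the right, $\pi(\sigma\tau)=(\pi\sigma)\tau$. Extended promotion: $\partial_j=\tau_j\tau_{j+1}\cdots\tau_{n-1}$ for $1\le j\le n$. *)

theory Defs
  imports Main
begin

text \<open>A poset P on [n] = {1..n} is given by its (reflexive) order relation P.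
  Permutations of [n] are lists in one-line notation: position p (0-based)
  of the list holds pi_(p+1).\<close>

definition is_poset_on :: "nat \<Rightarrow> nat rel \<Rightarrow> bool" where
  "is_poset_on n P \<longleftrightarrow> P \<subseteq> {1..n} \<times> {1..n} \<and> partial_order_on {1..n} P"

definition natural_labeling :: "nat rel \<Rightarrow> bool" where
  "natural_labeling P \<longleftrightarrow> (\<forall>i j. (i, j) \<in> P \<longrightarrow> i \<le> j)"

definition perms :: "nat \<Rightarrow> nat list set" where
  "perms n = {\<pi>. distinct \<pi> \<and> set \<pi> = {1..n}}"

definition linext :: "nat \<Rightarrow> nat rel \<Rightarrow> nat list set" where
  "linext n P = {\<pi> \<in> perms n. \<forall>p q. p < length \<pi> \<longrightarrow> q < length \<pi> \<longrightarrow>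
       (\<pi> ! p, \<pi> ! q) \<in> P \<longrightarrow> \<pi> ! p \<noteq> \<pi> ! q \<longrightarrow> p < q}"

definition comparable :: "nat rel \<Rightarrow> nat \<Rightarrow> nat \<Rightarrow> bool" where
  "comparable P a b \<longleftrightarrow> (a, b) \<in> P \<or> (b, a) \<in> P"

text \<open>tau_i (1-based i): swap pi_i and pi_(i+1) if they are incomparable.\<close>
definition tau :: "nat rel \<Rightarrow> nat \<Rightarrow> nat list \<Rightarrow> nat list" where
  "tau P i \<pi> = (if comparable P (\<pi> ! (i - 1)) (\<pi> ! i) then \<pi>
     else \<pi>[i - 1 := \<pi> ! i, i := \<pi> ! (i - 1)])"

text \<open>Extended promotion partial_j = tau_j tau_(j+1) ... tau_(n-1), acting on the right
  (tau_j is applied first).\<close>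
definition ext_prom :: "nat \<Rightarrow> nat rel \<Rightarrow> nat \<Rightarrow> nat list \<Rightarrow> nat list" where
  "ext_prom n P j \<pi> = fold (tau P) [j..<n] \<pi>"

end

theory Submission
  imports Defs "HOL-Combinatorics.Combinatorics"
begin

text \<open>With operators acting on the right, \<open>\<partial>\<^sub>j = \<tau>\<^sub>j \<partial>\<^sub>j\<^sub>+\<^sub>1\<close>. Every \<open>\<tau>\<^sub>i\<close> is an
  involution, so \<open>\<partial>\<^sub>j\<^sub>+\<^sub>1\<close> is injective on the finite set of words of length \<open>n\<close> over
  \<open>[n]\<close>, hence permutes it and has some order \<open>m > 0\<close> there. Therefore
  \<open>\<tau>\<^sub>j = \<tau>\<^sub>j \<partial>\<^sub>j\<^sub>+\<^sub>1\<^sup>m = \<partial>\<^sub>j \<partial>\<^sub>j\<^sub>+\<^sub>1\<^sup>m\<^sup>-\<^sup>1\<close>.\<close>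

lemma length_tau [simp]: "length (tau P i \<pi>) = length \<pi>"
  by (simp add: tau_def)

lemma set_tau:
  assumes "i < length \<pi>"
  shows "set (tau P i \<pi>) = set \<pi>"
proof -
  have "set (\<pi>[i - 1 := \<pi> ! i, i := \<pi> ! (i - 1)]) = set \<pi>"
    using assms by (simp add: set_swap)
  then show ?thesis by (simp add: tau_def)
qed

lemma tau_tau:
  assumes "i < length \<pi>"
  shows "tau P i (tau P i \<pi>) = \<pi>"
  using assms unfolding tau_def comparable_def
  by (auto simp: nth_list_update list_update_swap list_update_overwrite intro!: nth_equalityI)

lemma length_fold_tau [simp]: "length (fold (tau P) is \<pi>) = length \<pi>"
  by (induction "is" arbitrary: \<pi>) auto

lemma set_fold_tau:
  "\<forall>i\<in>set is. i < length \<pi> \<Longrightarrow> set (fold (tau P) is \<pi>) = set \<pi>"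
  by (induction "is" arbitrary: \<pi>) (auto simp: set_tau)

lemma fold_tau_rev_fold_tau:
  "\<forall>i\<in>set is. i < length \<pi> \<Longrightarrow> fold (tau P) (rev is) (fold (tau P) is \<pi>) = \<pi>"
  by (induction "is" arbitrary: \<pi>) (auto simp: tau_tau)

lemma ext_prom_Suc:
  "j < n \<Longrightarrow> ext_prom n P j \<pi> = ext_prom n P (Suc j) (tau P j \<pi>)"
  by (simp add: ext_prom_def upt_rec)

lemma inj_on_ext_prom: "inj_on (ext_prom n P j) {\<pi>. length \<pi> = n}"
proof (rule inj_on_inverseI)
  fix \<pi> :: "nat list" assume "\<pi> \<in> {\<pi>. length \<pi> = n}"
  then show "fold (tau P) (rev [j..<n]) (ext_prom n P j \<pi>) = \<pi>"
    unfolding ext_prom_def using fold_tau_rev_fold_tau[of "[j..<n]"] by auto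
qed

lemma ext_prom_words:
  assumes "length \<pi> = n" "set \<pi> \<subseteq> {1..n}"
  shows "length (ext_prom n P j \<pi>) = n" "set (ext_prom n P j \<pi>) \<subseteq> {1..n}"
  using assms set_fold_tau[of "[j..<n]" \<pi>] by (auto simp: ext_prom_def)

lemma inj_on_endo_funpow_eq_id:
  assumes "finite A" "f ` A \<subseteq> A" "inj_on f A"
  obtains m where "m > 0" "\<And>x. x \<in> A \<Longrightarrow> (f ^^ m) x = x"
proof -
  define g where "g x = (if x \<in> A then f x else x)" for x
  have "f ` A = A"
    using endo_inj_surj[OF assms] .
  then have "bij_betw g A A"
    using assms(3) unfolding bij_betw_def g_def inj_on_def by (auto simp: image_def)
  then have "g permutes A"
    by (rule bij_imp_permutes) (simp add: g_def)
  then have "permutation g"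
    using assms(1) permutation_permutes by blast
  then obtain m where m: "g ^^ m = id" "m > 0"
    by (rule permutation_is_nilpotent)
  have "(g ^^ k) x = (f ^^ k) x \<and> (f ^^ k) x \<in> A" if "x \<in> A" for k x
    using that assms(2) by (induction k) (auto simp: g_def)
  with m show ?thesis
    using that by (metis id_apply)
qed

theorem lemma2p2:
  fixes n j :: nat and P :: "nat rel"
  assumes "is_poset_on n P" and "natural_labeling P"
    and "1 \<le> j" and "j \<le> n - 1"
  shows "\<exists>ks. set ks \<subseteq> {1..n} \<and>
           (\<forall>\<pi> \<in> linext n P. tau P j \<pi> = fold (ext_prom n P) ks \<pi>)"
proof -
  define W where "W = {\<pi>. length \<pi> = n \<and> set \<pi> \<subseteq> {1..n}}"
  let ?d = "ext_prom n P (Suc j)"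
  have "finite W"
    unfolding W_def using finite_lists_length_eq[of "{1..n}" n] by (simp add: conj_commute)
  moreover have "?d ` W \<subseteq> W"
    unfolding W_def using ext_prom_words[of _ n P "Suc j"] by auto
  moreover have "inj_on ?d W"
    by (rule inj_on_subset[OF inj_on_ext_prom]) (auto simp: W_def)
  ultimately obtain m where m: "m > 0" "\<And>\<pi>. \<pi> \<in> W \<Longrightarrow> (?d ^^ m) \<pi> = \<pi>"
    using inj_on_endo_funpow_eq_id by blast
  have "tau P j \<pi> = fold (ext_prom n P) (j # replicate (m - 1) (Suc j)) \<pi>"
    if "\<pi> \<in> linext n P" for \<pi>
  proof -
    have "distinct \<pi>" "set \<pi> = {1..n}"
      using that by (auto simp: linext_def perms_def)
    then have "length \<pi> = n"
      by (metis card_atLeastAtMost diff_Suc_1 distinct_card)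
    then have "tau P j \<pi> \<in> W"
      using \<open>set \<pi> = {1..n}\<close> assms(3,4) by (simp add: W_def set_tau)
    then have "tau P j \<pi> = (?d ^^ (m - 1)) (?d (tau P j \<pi>))"
      using m by (metis Suc_diff_1 comp_apply funpow_Suc_right)
    also have "\<dots> = fold (ext_prom n P) (j # replicate (m - 1) (Suc j)) \<pi>"
      using assms(3,4) by (simp add: ext_prom_Suc)
    finally show ?thesis .
  qed
  moreover have "set (j # replicate (m - 1) (Suc j)) \<subseteq> {1..n}"
    using assms(3,4) by auto
  ultimately show ?thesis by blast
qed

end
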